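(* Let $F$ be a field with $\mathrm{char}\,F\neq 2$, let $n\ge 1$, and let $\lambda\in F$ be nonzero. Let $I_n$ be the $F$-algebra defined in the context. Then every Rota--Baxter operator $R$ of weight $\lambda$ on $I_n$ is splitting: there exist subalgebras $A_1,A_2$ of $I_n$ with $I_n=A_1\oplus A_2$ as vector spaces such that $R(a_1+a_2)=-\lambda a_2$ for all $a_1\in A_1$, $a_2\in A_2$.
   Context: $I_n$ denotes the $n$-dimensional (non-associative) algebra over $F$ with basis $e_1,\ldots,e_n$ and multiplication given by $e_n\cdot e_n=2e_n$, $e_n\cdot e_j=e_j$, $e_j\cdot e_j=e_n$ for $j=1,\ldots,n-1$, with all other products of basis elements equal to zero (extended bilinearly). A linear operator $R\colon A\to A$ on an algebra $A$ is a Rota--Baxter operator of weight $\lambda\in F$ if $R(x)R(y)=R(R(x)y+xR(y)+\lambda xy)$ for all $x,y\in A$. *)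

theory Defs
  imports Main
begin

text \<open>Elements of I_n are coordinate vectors x :: nat => 'a, where x i is the
coefficient of the basis vector e_i (i in {1..n}); coordinates outside {1..n} are 0.\<close>

definition In_carrier :: "nat \<Rightarrow> (nat \<Rightarrow> 'a::field) set" where
  "In_carrier n = {x. \<forall>i. i \<notin> {1..n} \<longrightarrow> x i = 0}"

definition vadd :: "(nat \<Rightarrow> 'a::field) \<Rightarrow> (nat \<Rightarrow> 'a) \<Rightarrow> (nat \<Rightarrow> 'a)" where
  "vadd x y = (\<lambda>k. x k + y k)"

definition vscale :: "'a::field \<Rightarrow> (nat \<Rightarrow> 'a) \<Rightarrow> (nat \<Rightarrow> 'a)" where
  "vscale c x = (\<lambda>k. c * x k)"

definition vzero :: "nat \<Rightarrow> 'a::field" where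
  "vzero = (\<lambda>k. 0)"

text \<open>Structure constants: coefficient of e_k in e_i * e_j.
  e_n e_n = 2 e_n, e_n e_j = e_j, e_j e_j = e_n (j < n), all others zero.\<close>

definition In_sc :: "nat \<Rightarrow> nat \<Rightarrow> nat \<Rightarrow> nat \<Rightarrow> 'a::field" where
  "In_sc n i j k =
     (if i = n \<and> j = n then (if k = n then 2 else 0)
      else if i = n \<and> j < n then (if k = j then 1 else 0)
      else if i = j \<and> j < n then (if k = n then 1 else 0)
      else 0)"

definition In_mult :: "nat \<Rightarrow> (nat \<Rightarrow> 'a::field) \<Rightarrow> (nat \<Rightarrow> 'a) \<Rightarrow> (nat \<Rightarrow> 'a)" where
  "In_mult n x y = (\<lambda>k. if k \<in> {1..n} then
      (\<Sum>i\<in>{1..n}. \<Sum>j\<in>{1..n}. x i * y j * In_sc n i j k) else 0)"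

definition is_linear_op :: "nat \<Rightarrow> ((nat \<Rightarrow> 'a::field) \<Rightarrow> (nat \<Rightarrow> 'a)) \<Rightarrow> bool" where
  "is_linear_op n R \<longleftrightarrow>
     (\<forall>x\<in>In_carrier n. R x \<in> In_carrier n) \<and>
     (\<forall>x\<in>In_carrier n. \<forall>y\<in>In_carrier n. R (vadd x y) = vadd (R x) (R y)) \<and>
     (\<forall>c. \<forall>x\<in>In_carrier n. R (vscale c x) = vscale c (R x))"

definition is_RB_op :: "nat \<Rightarrow> 'a::field \<Rightarrow> ((nat \<Rightarrow> 'a) \<Rightarrow> (nat \<Rightarrow> 'a)) \<Rightarrow> bool" where
  "is_RB_op n lam R \<longleftrightarrow> is_linear_op n R \<and>
     (\<forall>x\<in>In_carrier n. \<forall>y\<in>In_carrier n.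
        In_mult n (R x) (R y) =
        R (vadd (vadd (In_mult n (R x) y) (In_mult n x (R y))) (vscale lam (In_mult n x y))))"

definition is_subalgebra :: "nat \<Rightarrow> (nat \<Rightarrow> 'a::field) set \<Rightarrow> bool" where
  "is_subalgebra n A \<longleftrightarrow> A \<subseteq> In_carrier n \<and> vzero \<in> A \<and>
     (\<forall>x\<in>A. \<forall>y\<in>A. vadd x y \<in> A) \<and>
     (\<forall>c. \<forall>x\<in>A. vscale c x \<in> A) \<and>
     (\<forall>x\<in>A. \<forall>y\<in>A. In_mult n x y \<in> A)"

end

theory Submission
  imports Defs
begin

text \<open>
  Write \<open>x = x' + x\<^sub>n e\<^sub>n\<close> with \<open>x'\<close> in the span of \<open>e\<^sub>1, ..., e\<^sub>n\<^sub>-\<^sub>1\<close>; then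
  \<open>x y = x\<^sub>n y' + (\<langle>x', y'\<rangle> + 2 x\<^sub>n y\<^sub>n) e\<^sub>n\<close>, where \<open>x' = drop_top n x\<close> and
  \<open>\<langle>_, _\<rangle> = dot n\<close>. For any Rota--Baxter operator of weight \<open>\<lambda> \<noteq> 0\<close>, the kernels of \<open>R\<close> and of \<open>R + \<lambda>\<close> are subalgebras, and if \<open>R\<^sup>2 = -\<lambda>R\<close> they
  are complementary, since \<open>x = (x + R x / \<lambda>) - R x / \<lambda>\<close>; so it suffices to prove \<open>R\<^sup>2 = -\<lambda>R\<close>.
  Comparing coordinates in the Rota--Baxter identity for the pairs \<open>(e\<^sub>n, v)\<close> and \<open>(v, e\<^sub>n)\<close>,
  with \<open>v\<close> in the span of \<open>e\<^sub>1, ..., e\<^sub>n\<^sub>-\<^sub>1\<close>, gives \<open>R\<^sup>2 v = -\<lambda>R v\<close>. For \<open>e\<^sub>n\<close> itself one adds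
  the pair \<open>(e\<^sub>n, e\<^sub>n)\<close>; when \<open>R e\<^sub>n\<close> is not a multiple of \<open>e\<^sub>n\<close>, the same coordinate
  comparisons force \<open>2 (R e\<^sub>n)\<^sub>n + \<lambda> = 0\<close>, and \<open>char F \<noteq> 2\<close> is used to halve the
  \<open>e\<^sub>n\<close>-coordinate of the identity for \<open>(e\<^sub>n, e\<^sub>n)\<close>.
\<close>

definition dot :: "nat \<Rightarrow> (nat \<Rightarrow> 'a::field) \<Rightarrow> (nat \<Rightarrow> 'a) \<Rightarrow> 'a" where
  "dot n x y = (\<Sum>j\<in>{1..<n}. x j * y j)"

definition basis :: "nat \<Rightarrow> nat \<Rightarrow> 'a::field" where
  "basis j = (\<lambda>k. if k = j then 1 else 0)"

definition drop_top :: "nat \<Rightarrow> (nat \<Rightarrow> 'a::field) \<Rightarrow> nat \<Rightarrow> 'a" where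
  "drop_top n x = (\<lambda>k. if k = n then 0 else x k)"

lemma In_carrier_vanish: "x \<in> In_carrier n \<Longrightarrow> \<not> (1 \<le> k \<and> k \<le> n) \<Longrightarrow> x k = 0"
  unfolding In_carrier_def by auto

lemma In_carrierI: "(\<And>k. \<not> (1 \<le> k \<and> k \<le> n) \<Longrightarrow> x k = 0) \<Longrightarrow> x \<in> In_carrier n"
  unfolding In_carrier_def by auto

lemma In_carrier_eqI:
  assumes "x \<in> In_carrier n" "y \<in> In_carrier n"
    and "\<And>k. 1 \<le> k \<Longrightarrow> k < n \<Longrightarrow> x k = y k" and "x n = y n"
  shows "x = y"
proof
  fix k show "x k = y k"
    using assms In_carrier_vanish[OF assms(1), of k] In_carrier_vanish[OF assms(2), of k]
    by (cases "1 \<le> k \<and> k < n \<or> k = n") auto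
qed

lemma lincomb_in_In_carrier:
  "x \<in> In_carrier n \<Longrightarrow> y \<in> In_carrier n \<Longrightarrow> (\<lambda>k. a * x k + c * y k) \<in> In_carrier n"
  by (rule In_carrierI) (simp add: In_carrier_vanish)

lemma scale_in_In_carrier: "x \<in> In_carrier n \<Longrightarrow> (\<lambda>k. a * x k) \<in> In_carrier n"
  by (rule In_carrierI) (simp add: In_carrier_vanish)

lemma basis_in_In_carrier: "j \<in> {1..n} \<Longrightarrow> basis j \<in> In_carrier n"
  by (rule In_carrierI) (auto simp: basis_def)

lemma drop_top_in_In_carrier: "x \<in> In_carrier n \<Longrightarrow> drop_top n x \<in> In_carrier n"
  by (rule In_carrierI) (simp add: drop_top_def In_carrier_vanish)

lemma In_mult_in_In_carrier: "In_mult n x y \<in> In_carrier n"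
  by (rule In_carrierI) (auto simp: In_mult_def)

lemma vadd_in_In_carrier: "x \<in> In_carrier n \<Longrightarrow> y \<in> In_carrier n \<Longrightarrow> vadd x y \<in> In_carrier n"
  using lincomb_in_In_carrier[of x n y 1 1] by (simp add: vadd_def)

lemma vscale_in_In_carrier: "x \<in> In_carrier n \<Longrightarrow> vscale c x \<in> In_carrier n"
  by (simp add: vscale_def scale_in_In_carrier)

lemma vzero_in_In_carrier: "vzero \<in> In_carrier n"
  by (simp add: In_carrier_def vzero_def)

lemma drop_top_top [simp]: "drop_top n x n = 0"
  by (simp add: drop_top_def)

lemma drop_top_decomp: "x = (\<lambda>k. drop_top n x k + x n * basis n k)"
  by (simp add: drop_top_def basis_def fun_eq_iff)

lemma dot_commute: "dot n x y = dot n y x"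
  unfolding dot_def by (simp add: mult.commute)

lemma dot_drop_top_left: "dot n (drop_top n x) y = dot n x y"
  unfolding dot_def drop_top_def by (intro sum.cong) auto

lemma dot_basis_left: "j \<in> {1..<n} \<Longrightarrow> dot n (basis j) y = y j"
proof -
  have "dot n (basis j) y = (\<Sum>i\<in>{1..<n}. if i = j then y j else 0)"
    unfolding dot_def basis_def by (intro sum.cong) auto
  then show "j \<in> {1..<n} \<Longrightarrow> dot n (basis j) y = y j" by simp
qed

lemma dot_basis_top_left: "dot n (basis n) y = 0"
  unfolding dot_def basis_def by (intro sum.neutral) auto

lemma dot_basis_top_right: "dot n y (basis n) = 0"
  unfolding dot_def basis_def by (intro sum.neutral) auto

lemma In_mult_apply:
  assumes "n \<ge> 1"
  shows "In_mult n x y k =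
    (if 1 \<le> k \<and> k < n then x n * y k else if k = n then dot n x y + 2 * x n * y n else 0)"
proof -
  have split: "{1..n} = insert n {1..<n}" using assms by auto
  have lower: "In_sc n i j k = (if i = n then if j = k then 1 else 0 else 0)"
    if "1 \<le> k" "k < n" for i j
    using that by (simp add: In_sc_def)
  have top: "In_sc n i j n = (if j = i then if i = n then 2 else if i < n then 1 else 0 else 0)"
    for i j
    by (auto simp: In_sc_def)
  show ?thesis
    unfolding In_mult_def dot_def
    by (simp only: split)
      (auto simp: lower top if_distrib[where f="\<lambda>z. _ * z"] cong: if_cong intro!: sum.cong)
qed

lemma In_mult_decomp:
  assumes "n \<ge> 1" "y \<in> In_carrier n"
  shows "In_mult n x y = (\<lambda>k. x n * drop_top n y k + (dot n x y + 2 * x n * y n) * basis n k)"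
proof
  fix k show "In_mult n x y k = x n * drop_top n y k + (dot n x y + 2 * x n * y n) * basis n k"
    using assms In_carrier_vanish[OF assms(2), of k]
    by (auto simp: In_mult_apply drop_top_def basis_def)
qed

lemma In_mult_basis_top_right:
  assumes "n \<ge> 1" shows "In_mult n x (basis n) = (\<lambda>k. 2 * x n * basis n k)"
  using In_mult_decomp[OF assms basis_in_In_carrier[of n n], of x] assms
  by (simp add: dot_basis_top_right) (simp add: drop_top_def basis_def fun_eq_iff)

lemma In_mult_basis_top_left:
  assumes "n \<ge> 1" "y \<in> In_carrier n"
  shows "In_mult n (basis n) y = (\<lambda>k. drop_top n y k + 2 * y n * basis n k)"
  using In_mult_decomp[OF assms, of "basis n"] by (simp add: dot_basis_top_left) (simp add: basis_def)

lemma In_mult_lower_left: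
  assumes "n \<ge> 1" "y \<in> In_carrier n" "x n = 0"
  shows "In_mult n x y = (\<lambda>k. dot n x y * basis n k)"
  using In_mult_decomp[OF assms(1,2)] assms(3) by simp

lemma In_mult_scale_left: "In_mult n (vscale a x) y = vscale a (In_mult n x y)"
  unfolding In_mult_def vscale_def by (rule ext) (simp add: sum_distrib_left algebra_simps)

lemma In_mult_scale_right: "In_mult n x (vscale a y) = vscale a (In_mult n x y)"
  unfolding In_mult_def vscale_def by (rule ext) (simp add: sum_distrib_left algebra_simps)

lemma In_mult_zero_left: "In_mult n vzero y = vzero"
  unfolding In_mult_def vzero_def by (rule ext) simp

lemma In_mult_zero_right: "In_mult n x vzero = vzero"
  unfolding In_mult_def vzero_def by (rule ext) simp

lemma linear_op_in_In_carrier: "is_linear_op n R \<Longrightarrow> x \<in> In_carrier n \<Longrightarrow> R x \<in> In_carrier n"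
  unfolding is_linear_op_def by blast

lemma linear_op_vadd:
  "is_linear_op n R \<Longrightarrow> x \<in> In_carrier n \<Longrightarrow> y \<in> In_carrier n \<Longrightarrow> R (vadd x y) = vadd (R x) (R y)"
  unfolding is_linear_op_def by blast

lemma linear_op_vscale: "is_linear_op n R \<Longrightarrow> x \<in> In_carrier n \<Longrightarrow> R (vscale c x) = vscale c (R x)"
  unfolding is_linear_op_def by blast

lemma linear_op_scale:
  "is_linear_op n R \<Longrightarrow> x \<in> In_carrier n \<Longrightarrow> R (\<lambda>k. a * x k) = (\<lambda>k. a * R x k)"
  using linear_op_vscale by (simp add: vscale_def)

lemma linear_op_lincomb:
  assumes "is_linear_op n R" "x \<in> In_carrier n" "y \<in> In_carrier n"
  shows "R (\<lambda>k. a * x k + c * y k) = (\<lambda>k. a * R x k + c * R y k)"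
  using linear_op_vadd[OF assms(1) vscale_in_In_carrier[OF assms(2)] vscale_in_In_carrier[OF assms(3)]]
    linear_op_vscale[OF assms(1,2)] linear_op_vscale[OF assms(1,3)]
  by (simp add: vadd_def vscale_def)

lemma linear_op_lincomb3:
  assumes "is_linear_op n R" "x \<in> In_carrier n" "y \<in> In_carrier n" "z \<in> In_carrier n"
  shows "R (\<lambda>k. a * x k + b * y k + c * z k) = (\<lambda>k. a * R x k + b * R y k + c * R z k)"
  using linear_op_lincomb[OF assms(1) lincomb_in_In_carrier[OF assms(2,3)] assms(4), of 1 a b c]
    linear_op_lincomb[OF assms(1,2,3)]
  by simp

lemma linear_op_zero: "is_linear_op n R \<Longrightarrow> R vzero = vzero"
  using linear_op_vscale[OF _ vzero_in_In_carrier, of n R 0] by (simp add: vscale_def vzero_def)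

lemma RB_op_linear: "is_RB_op n lam R \<Longrightarrow> is_linear_op n R"
  unfolding is_RB_op_def by blast

lemma RB_op_eq:
  "is_RB_op n lam R \<Longrightarrow> x \<in> In_carrier n \<Longrightarrow> y \<in> In_carrier n \<Longrightarrow>
   In_mult n (R x) (R y) =
   R (vadd (vadd (In_mult n (R x) y) (In_mult n x (R y))) (vscale lam (In_mult n x y)))"
  unfolding is_RB_op_def by blast

lemma vscale_left_cancel: "c \<noteq> 0 \<Longrightarrow> vscale c x = vscale c y \<longleftrightarrow> x = y"
  by (auto simp: vscale_def fun_eq_iff)

lemma vscale_vzero: "vscale c vzero = vzero"
  by (simp add: vscale_def vzero_def)

definition is_splitting :: "nat \<Rightarrow> 'a::field \<Rightarrow> ((nat \<Rightarrow> 'a) \<Rightarrow> (nat \<Rightarrow> 'a)) \<Rightarrow> bool" where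
  "is_splitting n lam R \<longleftrightarrow> (\<exists>A1 A2. is_subalgebra n A1 \<and> is_subalgebra n A2 \<and>
     A1 \<inter> A2 = {vzero} \<and>
     (\<forall>x\<in>In_carrier n. \<exists>a1\<in>A1. \<exists>a2\<in>A2. x = vadd a1 a2) \<and>
     (\<forall>a1\<in>A1. \<forall>a2\<in>A2. R (vadd a1 a2) = vscale (- lam) a2))"

lemma RB_op_kernel_subalgebra:
  assumes RB: "is_RB_op n lam R" and "lam \<noteq> 0"
  shows "is_subalgebra n {x \<in> In_carrier n. R x = vzero}"
  unfolding is_subalgebra_def
proof (intro conjI ballI allI)
  have lin: "is_linear_op n R" using RB_op_linear[OF RB] .
  show "vzero \<in> {x \<in> In_carrier n. R x = vzero}"
    using vzero_in_In_carrier linear_op_zero[OF lin] by blast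
  fix x y
  assume x: "x \<in> {x \<in> In_carrier n. R x = vzero}" and y: "y \<in> {x \<in> In_carrier n. R x = vzero}"
  show "vadd x y \<in> {x \<in> In_carrier n. R x = vzero}"
    using x y vadd_in_In_carrier linear_op_vadd[OF lin] by (auto simp: vadd_def vzero_def)
  have "vzero = R (vadd (vadd vzero vzero) (vscale lam (In_mult n x y)))"
    using RB_op_eq[OF RB, of x y] x y by (simp add: In_mult_zero_left In_mult_zero_right)
  also have "vadd (vadd vzero vzero) (vscale lam (In_mult n x y)) = vscale lam (In_mult n x y)"
    by (simp add: vadd_def vzero_def)
  finally have "vscale lam (R (In_mult n x y)) = vzero"
    using linear_op_vscale[OF lin In_mult_in_In_carrier] by simp
  then have "vscale lam (R (In_mult n x y)) = vscale lam vzero"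
    by (simp only: vscale_vzero)
  then show "In_mult n x y \<in> {x \<in> In_carrier n. R x = vzero}"
    using \<open>lam \<noteq> 0\<close> In_mult_in_In_carrier by (simp add: vscale_left_cancel)
next
  fix c x assume "x \<in> {x \<in> In_carrier n. R x = vzero}"
  then show "vscale c x \<in> {x \<in> In_carrier n. R x = vzero}"
    using vscale_in_In_carrier linear_op_vscale[OF RB_op_linear[OF RB]]
    by (auto simp: vscale_def vzero_def)
qed auto

lemma RB_op_eigenspace_subalgebra:
  assumes RB: "is_RB_op n lam R" and "lam \<noteq> 0"
  shows "is_subalgebra n {x \<in> In_carrier n. R x = vscale (- lam) x}"
  unfolding is_subalgebra_def
proof (intro conjI ballI allI)
  have lin: "is_linear_op n R" using RB_op_linear[OF RB] .
  show "vzero \<in> {x \<in> In_carrier n. R x = vscale (- lam) x}"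
    using vzero_in_In_carrier linear_op_zero[OF lin] by (simp add: vscale_vzero)
  fix x y
  assume x: "x \<in> {x \<in> In_carrier n. R x = vscale (- lam) x}"
    and y: "y \<in> {x \<in> In_carrier n. R x = vscale (- lam) x}"
  show "vadd x y \<in> {x \<in> In_carrier n. R x = vscale (- lam) x}"
    using x y vadd_in_In_carrier linear_op_vadd[OF lin]
    by (auto simp: vadd_def vscale_def algebra_simps)
  let ?m = "In_mult n x y"
  have "vscale (- lam) (vscale (- lam) ?m) =
      R (vadd (vadd (vscale (- lam) ?m) (vscale (- lam) ?m)) (vscale lam ?m))"
    using RB_op_eq[OF RB, of x y] x y by (simp add: In_mult_scale_left In_mult_scale_right)
  also have "vadd (vadd (vscale (- lam) ?m) (vscale (- lam) ?m)) (vscale lam ?m) = vscale (- lam) ?m"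
    by (simp add: vadd_def vscale_def algebra_simps)
  finally have "vscale (- lam) (R ?m) = vscale (- lam) (vscale (- lam) ?m)"
    using linear_op_vscale[OF lin In_mult_in_In_carrier] by simp
  then show "?m \<in> {x \<in> In_carrier n. R x = vscale (- lam) x}"
    using \<open>lam \<noteq> 0\<close> In_mult_in_In_carrier by (simp add: vscale_left_cancel)
next
  fix c x assume "x \<in> {x \<in> In_carrier n. R x = vscale (- lam) x}"
  then show "vscale c x \<in> {x \<in> In_carrier n. R x = vscale (- lam) x}"
    using vscale_in_In_carrier linear_op_vscale[OF RB_op_linear[OF RB]]
    by (auto simp: vscale_def algebra_simps)
qed auto

lemma RB_op_splitting_if_square:
  assumes RB: "is_RB_op n lam R" and "lam \<noteq> 0"
    and square: "\<And>x. x \<in> In_carrier n \<Longrightarrow> R (R x) = vscale (- lam) (R x)"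
  shows "is_splitting n lam R"
proof -
  have lin: "is_linear_op n R" using RB_op_linear[OF RB] .
  define A1 where "A1 = {x \<in> In_carrier n. R x = vzero}"
  define A2 where "A2 = {x \<in> In_carrier n. R x = vscale (- lam) x}"
  have "A1 \<inter> A2 \<subseteq> {vzero}"
  proof
    fix x assume "x \<in> A1 \<inter> A2"
    then have "vscale (- lam) x = vscale (- lam) vzero"
      unfolding A1_def A2_def by (auto simp: vscale_vzero)
    then show "x \<in> {vzero}" using \<open>lam \<noteq> 0\<close> by (simp add: vscale_left_cancel)
  qed
  moreover have "vzero \<in> A1 \<inter> A2"
    using RB_op_kernel_subalgebra[OF RB \<open>lam \<noteq> 0\<close>]
      RB_op_eigenspace_subalgebra[OF RB \<open>lam \<noteq> 0\<close>]
    unfolding A1_def A2_def is_subalgebra_def by blast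
  moreover have "\<exists>a1\<in>A1. \<exists>a2\<in>A2. x = vadd a1 a2" if x: "x \<in> In_carrier n" for x
  proof (intro bexI)
    have Rx: "R x \<in> In_carrier n" using linear_op_in_In_carrier[OF lin x] .
    show "x = vadd (vadd x (vscale (1 / lam) (R x))) (vscale (- 1 / lam) (R x))"
      by (simp add: vadd_def vscale_def fun_eq_iff algebra_simps)
    show "vadd x (vscale (1 / lam) (R x)) \<in> A1"
      using x Rx \<open>lam \<noteq> 0\<close> unfolding A1_def
      by (simp add: vadd_in_In_carrier vscale_in_In_carrier linear_op_vadd[OF lin]
          linear_op_vscale[OF lin] square)
        (simp add: vadd_def vscale_def vzero_def)
    show "vscale (- 1 / lam) (R x) \<in> A2"
      using Rx \<open>lam \<noteq> 0\<close> unfolding A2_def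
      by (simp add: vscale_in_In_carrier linear_op_vscale[OF lin] square x)
        (simp add: vscale_def fun_eq_iff)
  qed
  moreover have "R (vadd a1 a2) = vscale (- lam) a2" if "a1 \<in> A1" "a2 \<in> A2" for a1 a2
    using that linear_op_vadd[OF lin] unfolding A1_def A2_def
    by (simp add: vadd_def vzero_def vscale_def)
  ultimately show ?thesis
    using RB_op_kernel_subalgebra[OF RB \<open>lam \<noteq> 0\<close>]
      RB_op_eigenspace_subalgebra[OF RB \<open>lam \<noteq> 0\<close>]
    unfolding is_splitting_def A1_def[symmetric] A2_def[symmetric] by blast
qed

context
  fixes n :: nat and lam :: "'a::field" and R :: "(nat \<Rightarrow> 'a) \<Rightarrow> nat \<Rightarrow> 'a"
  assumes n_ge_1: "n \<ge> 1" and RB: "is_RB_op n lam R"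
begin

private lemma lin: "is_linear_op n R"
  using RB_op_linear[OF RB] .

private lemma basis_top: "basis n \<in> In_carrier n"
  using basis_in_In_carrier[of n n] n_ge_1 by simp

private lemma R_in: "x \<in> In_carrier n \<Longrightarrow> R x \<in> In_carrier n"
  using linear_op_in_In_carrier[OF lin] .

lemma R_decomp:
  "x \<in> In_carrier n \<Longrightarrow> R x = (\<lambda>k. R (drop_top n x) k + x n * R (basis n) k)"
  using linear_op_lincomb[OF lin drop_top_in_In_carrier basis_top, of x 1 "x n"]
    drop_top_decomp[of x n]
  by simp

lemma RB_top_top:
  "In_mult n (R (basis n)) (R (basis n)) =
   (\<lambda>k. R (drop_top n (R (basis n))) k + (4 * R (basis n) n + 2 * lam) * R (basis n) k)"
proof -
  let ?f = "basis n :: nat \<Rightarrow> 'a"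
  have "vadd (vadd (In_mult n (R ?f) ?f) (In_mult n ?f (R ?f))) (vscale lam (In_mult n ?f ?f)) =
      (\<lambda>k. 1 * drop_top n (R ?f) k + (4 * R ?f n + 2 * lam) * ?f k)"
    using n_ge_1 R_in[OF basis_top]
    by (simp add: In_mult_basis_top_right In_mult_basis_top_left basis_top fun_eq_iff
        vadd_def vscale_def)
      (simp add: basis_def drop_top_def algebra_simps)
  then show ?thesis
    using RB_op_eq[OF RB basis_top basis_top]
      linear_op_lincomb[OF lin drop_top_in_In_carrier[OF R_in[OF basis_top]] basis_top,
        of 1 "4 * R (basis n) n + 2 * lam"]
    by simp
qed

lemma RB_lower_top:
  assumes v: "v \<in> In_carrier n" "v n = 0"
  shows "In_mult n (R v) (R (basis n)) =
    (\<lambda>k. (2 * R v n + dot n v (R (basis n))) * R (basis n) k)"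
proof -
  have "vadd (vadd (In_mult n (R v) (basis n)) (In_mult n v (R (basis n))))
      (vscale lam (In_mult n v (basis n))) =
    (\<lambda>k. (2 * R v n + dot n v (R (basis n))) * basis n k)"
    using n_ge_1 v R_in[OF basis_top]
    by (simp add: In_mult_basis_top_right In_mult_lower_left vadd_def vscale_def algebra_simps)
  then show ?thesis
    using RB_op_eq[OF RB v(1) basis_top] linear_op_scale[OF lin basis_top] by simp
qed

lemma RB_top_lower:
  assumes v: "v \<in> In_carrier n" "v n = 0"
  shows "In_mult n (R (basis n)) (R v) =
    (\<lambda>k. (R (basis n) n + lam) * R v k + 1 * R (drop_top n (R v)) k
      + (dot n (R (basis n)) v + 2 * R v n) * R (basis n) k)"
proof -
  have "vadd (vadd (In_mult n (R (basis n)) v) (In_mult n (basis n) (R v)))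
      (vscale lam (In_mult n (basis n) v)) =
    (\<lambda>k. (R (basis n) n + lam) * v k + 1 * drop_top n (R v) k
      + (dot n (R (basis n)) v + 2 * R v n) * basis n k)"
    unfolding In_mult_decomp[OF n_ge_1 v(1), of "R (basis n)"]
      In_mult_basis_top_left[OF n_ge_1 R_in[OF v(1)]] In_mult_basis_top_left[OF n_ge_1 v(1)]
    using v(2) by (simp add: vadd_def vscale_def fun_eq_iff drop_top_def algebra_simps)
  then show ?thesis
    using RB_op_eq[OF RB basis_top v(1)]
      linear_op_lincomb3[OF lin v(1) drop_top_in_In_carrier[OF R_in[OF v(1)]] basis_top,
        of "R (basis n) n + lam" 1 "dot n (R (basis n)) v + 2 * R v n"]
    by simp
qed

lemma R_R_lower:
  assumes v: "v \<in> In_carrier n" "v n = 0"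
  shows "R (R v) = (\<lambda>k. - lam * R v k)"
proof -
  have Rv: "R v \<in> In_carrier n" using R_in[OF v(1)] .
  have RRv: "R (R v) k = R (drop_top n (R v)) k + R v n * R (basis n) k" for k
    using fun_cong[OF R_decomp[OF Rv], of k] .
  note top_lower = fun_cong[OF RB_top_lower[OF v]]
    and lower_top = fun_cong[OF RB_lower_top[OF v]]
  show ?thesis
  proof (rule In_carrier_eqI)
    show "R (R v) \<in> In_carrier n" using R_in[OF Rv] .
    show "(\<lambda>k. - lam * R v k) \<in> In_carrier n" using scale_in_In_carrier[OF Rv] .
    show "R (R v) k = - lam * R v k" if "1 \<le> k" "k < n" for k
      using top_lower[of k] lower_top[of k] RRv[of k] that dot_commute[of n v "R (basis n)"]
      by (simp add: In_mult_apply[OF n_ge_1]) algebra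
    show "R (R v) n = - lam * R v n"
      using top_lower[of n] lower_top[of n] RRv[of n] dot_commute[of n v "R (basis n)"]
        dot_commute[of n "R v" "R (basis n)"]
      by (simp add: In_mult_apply[OF n_ge_1]) algebra
  qed
qed

lemma R_lower_top_coord:
  assumes j: "j \<in> {1..<n}" "R (basis n) j \<noteq> 0" and u: "u \<in> In_carrier n" "u n = 0"
  shows "R u n = - dot n u (R (basis n))"
proof -
  have "R u n * R (basis n) j = (2 * R u n + dot n u (R (basis n))) * R (basis n) j"
    using fun_cong[OF RB_lower_top[OF u], of j] j(1) by (simp add: In_mult_apply[OF n_ge_1])
  then have "(R u n + dot n u (R (basis n))) * R (basis n) j = 0" by algebra
  then show ?thesis using j(2) by (simp add: eq_neg_iff_add_eq_0)
qed

lemma R_basis_top_top_coord: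
  assumes j: "j \<in> {1..<n}" "R (basis n) j \<noteq> 0"
  shows "2 * R (basis n) n + lam = 0"
proof -
  have v: "basis j \<in> In_carrier n" "basis j n = 0"
    using j(1) basis_in_In_carrier[of j n] by (auto simp: basis_def)
  have Rv: "R (basis j) \<in> In_carrier n" using R_in[OF v(1)] .
  have c: "R (basis j) n = - R (basis n) j"
    using R_lower_top_coord[OF j v] dot_basis_left[OF j(1)] by simp
  have p: "R (drop_top n (R (basis j))) n = - dot n (R (basis j)) (R (basis n))"
    using R_lower_top_coord[OF j drop_top_in_In_carrier[OF Rv]] by (simp add: dot_drop_top_left)
  have "dot n (R (basis j)) (R (basis n)) + 2 * R (basis j) n * R (basis n) n =
      (2 * R (basis j) n + R (basis n) j) * R (basis n) n"
    using fun_cong[OF RB_lower_top[OF v], of n]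
    by (simp add: In_mult_apply[OF n_ge_1] dot_basis_left[OF j(1)])
  moreover have
    "R (drop_top n (R (basis j))) n + R (basis j) n * R (basis n) n = - lam * R (basis j) n"
    using fun_cong[OF R_decomp[OF Rv], of n] fun_cong[OF R_R_lower[OF v], of n] by simp
  ultimately have "(2 * R (basis n) n + lam) * R (basis n) j = 0"
    using c p by algebra
  then show ?thesis using j(2) by simp
qed

lemma R_R_top:
  assumes two: "(2::'a) \<noteq> 0"
  shows "R (R (basis n)) = (\<lambda>k. - lam * R (basis n) k)"
proof -
  let ?f = "basis n :: nat \<Rightarrow> 'a"
  let ?d = "R ?f n" and ?w = "drop_top n (R ?f)"
  have Rf: "R ?f \<in> In_carrier n" using R_in[OF basis_top] .
  have Rw_top: "R ?w n = - dot n (R ?f) (R ?f)"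
  proof (cases "\<exists>j\<in>{1..<n}. R ?f j \<noteq> 0")
    case True
    then obtain j where "j \<in> {1..<n}" "R ?f j \<noteq> 0" by blast
    from R_lower_top_coord[OF this drop_top_in_In_carrier[OF Rf]] show ?thesis
      by (simp add: dot_drop_top_left)
  next
    case False
    have "?w = vzero"
    proof (rule In_carrier_eqI[OF drop_top_in_In_carrier[OF Rf] vzero_in_In_carrier])
      show "?w k = vzero k" if "1 \<le> k" "k < n" for k
        using False that by (simp add: drop_top_def vzero_def)
    qed (simp add: vzero_def)
    moreover have "dot n (R ?f) (R ?f) = 0"
      using False unfolding dot_def by (intro sum.neutral) auto
    ultimately show ?thesis using linear_op_zero[OF lin] by (simp add: vzero_def)
  qed
  have weight: "(2 * ?d + lam) * R ?f k = 0" if "1 \<le> k" "k < n" for k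
    using R_basis_top_top_coord[of k] that by (cases "R ?f k = 0") auto
  note top_top = fun_cong[OF RB_top_top]
  have RRf: "R (R ?f) k = R ?w k + ?d * R ?f k" for k
    using fun_cong[OF R_decomp[OF Rf], of k] .
  have "2 * (dot n (R ?f) (R ?f) - (?d * ?d + lam * ?d)) = 0"
    using top_top[of n] Rw_top by (simp add: In_mult_apply[OF n_ge_1]) algebra
  then have dot_Rf: "dot n (R ?f) (R ?f) = ?d * ?d + lam * ?d"
    using two by (metis mult_eq_0_iff eq_iff_diff_eq_0)
  show ?thesis
  proof (rule In_carrier_eqI)
    show "R (R ?f) \<in> In_carrier n" using R_in[OF Rf] .
    show "(\<lambda>k. - lam * R ?f k) \<in> In_carrier n" using scale_in_In_carrier[OF Rf] .
    show "R (R ?f) k = - lam * R ?f k" if "1 \<le> k" "k < n" for k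
      using RRf[of k] top_top[of k] weight[OF that] that
      by (simp add: In_mult_apply[OF n_ge_1]) algebra
    show "R (R ?f) n = - lam * R ?f n"
      using RRf[of n] Rw_top dot_Rf by algebra
  qed
qed

lemma RB_op_square:
  assumes two: "(2::'a) \<noteq> 0" and x: "x \<in> In_carrier n"
  shows "R (R x) = vscale (- lam) (R x)"
proof -
  have "R (R x) = R (\<lambda>k. 1 * R (drop_top n x) k + x n * R (basis n) k)"
    using R_decomp[OF x] by simp
  also have "\<dots> = (\<lambda>k. R (R (drop_top n x)) k + x n * R (R (basis n)) k)"
    using linear_op_lincomb[OF lin R_in[OF drop_top_in_In_carrier[OF x]] R_in[OF basis_top],
        of 1 "x n"]
    by simp
  also have "\<dots> = vscale (- lam) (\<lambda>k. R (drop_top n x) k + x n * R (basis n) k)"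
    using R_R_lower[OF drop_top_in_In_carrier[OF x] drop_top_top] R_R_top[OF two]
    by (simp add: vscale_def algebra_simps)
  also have "\<dots> = vscale (- lam) (R x)"
    using R_decomp[OF x] by simp
  finally show ?thesis .
qed

end

theorem corollary1:
  fixes lam :: "'a::field" and n :: nat and R :: "(nat \<Rightarrow> 'a) \<Rightarrow> (nat \<Rightarrow> 'a)"
  assumes "(2::'a) \<noteq> 0" and "n \<ge> 1" and "lam \<noteq> 0"
    and "is_RB_op n lam R"
  shows "\<exists>A1 A2. is_subalgebra n A1 \<and> is_subalgebra n A2 \<and>
           A1 \<inter> A2 = {vzero} \<and>
           (\<forall>x\<in>In_carrier n. \<exists>a1\<in>A1. \<exists>a2\<in>A2. x = vadd a1 a2) \<and>
           (\<forall>a1\<in>A1. \<forall>a2\<in>A2. R (vadd a1 a2) = vscale (- lam) a2)"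
proof -
  have "is_splitting n lam R"
    by (rule RB_op_splitting_if_square[OF assms(4,3)]) (rule RB_op_square[OF assms(2,4,1)])
  then show ?thesis unfolding is_splitting_def .
qed

end
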